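(* Let $k\ge2$ be an integer, $X>0$ and $\beta\in\mathbb R$. For all integers $q>2$ and all integers $a$ with $(a,q)=1$, $$\left|\Re\left(\frac{S_k^*(q,a)}{(1-2\pi i\beta X)^{1/k}}\right)\right|\le(1-\delta_k)\varphi(q),$$ where $\delta_k=\frac{\pi^2}{2^{2k+3}C_k^{2k}}$ and $C_k=128$ if $k=2$, $C_k=\prod_{p\le k^6}k$ (product over primes $p\le k^6$) if $k\ge3$.
   Context: $S_k^*(q,a)=\sum_{1\le\ell\le q,\,(\ell,q)=1}e(a\ell^k/q)$ with $e(\alpha)=e^{2\pi i\alpha}$; $\varphi$ is Euler's totient; $(1-2\pi i\beta X)^{1/k}$ uses the principal branch. *)

theory Defs
  imports "HOL-Analysis.Analysis" "HOL-Number_Theory.Number_Theory"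
begin

definition Sstar :: "nat \<Rightarrow> nat \<Rightarrow> int \<Rightarrow> complex" where
  "Sstar k q a = (\<Sum>l\<in>{l\<in>{1..q}. coprime l q}.
      exp (2 * pi * \<i> * of_real (of_int (a * int l ^ k) / real q)))"

definition Ck :: "nat \<Rightarrow> real" where
  "Ck k = (if k = 2 then 128 else (\<Prod>p\<in>{p::nat. prime p \<and> p \<le> k ^ 6}. real k))"

definition delta_k :: "nat \<Rightarrow> real" where
  "delta_k k = pi ^ 2 / (2 ^ (2 * k + 3) * Ck k ^ (2 * k))"

end

theory Submission
  imports Defs
begin

text \<open>
  Write \<open>(1 - 2\<pi>i\<beta>X)\<^bsup>-1/k\<^esup> = W e\<^bsup>-i\<psi>\<^esup>\<close> with \<open>0 < W \<le> 1\<close>, \<open>W\<^sup>k = cos (k\<psi>)\<close> and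
  \<open>\<bar>k\<psi>\<bar> < \<pi>/2\<close>; the real part in question is then \<open>W\<close> times the sum of \<open>cos \<theta>\<^sub>l\<close>,
  \<open>\<theta>\<^sub>l = 2\<pi>al\<^sup>k/q - \<psi>\<close>, over the units \<open>l\<close> modulo \<open>q\<close>.

  If \<open>q\<close> divides \<open>2(l\<^sup>k - 1)\<close> for every unit \<open>l\<close>, all \<open>\<bar>cos \<theta>\<^sub>l\<bar>\<close> coincide and
  \<open>q \<le> k\<^sup>2 2\<^bsup>k+3\<^esup>\<close>. Either \<open>\<psi>\<close> is not tiny, and then \<open>W\<close> is bounded away from \<open>1\<close>,
  or \<open>\<theta>\<^sub>1\<close> is close to \<open>2\<pi>a/q\<close>, which is far from \<open>\<pi>\<int>\<close>.

  Otherwise \<open>\<bar>cos \<theta>\<bar> \<le> (3 + cos 2\<theta>)/4\<close> reduces the claim to a saving for \<open>\<bar>S\<^sub>k\<^sup>*(q, 2a)\<bar>\<close>.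
  That sum vanishes unless every \<open>d\<close> with \<open>d\<^sup>2 | q\<close> divides \<open>2ak\<close>; then it is multiplicative
  along \<open>q = p\<^sup>e r\<close>, where \<open>p\<^sup>e\<close> does not divide \<open>2(l\<^sup>k - 1)\<close> for some unit \<open>l\<close>. Either
  \<open>p > 4k + 1\<close> and \<open>e = 1\<close>: the terms \<open>e(2al\<^sup>k/p)\<close> take each value at most \<open>k\<close> times, so
  most of them stay away from the direction of the sum; or \<open>p\<^sup>e \<le> 20k\<^sup>3\<close>, and already the
  terms at \<open>1\<close> and \<open>l\<close> give a saving \<open>2/p\<^bsup>2e\<^esup>\<close>.
\<close>

definition e_frac :: "int \<Rightarrow> nat \<Rightarrow> complex" where
  "e_frac y m = cis (2 * pi * real_of_int y / real m)"

lemma e_frac_add: "e_frac (x + y) m = e_frac x m * e_frac y m"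
  by (simp add: e_frac_def cis_mult add_divide_distrib distrib_left)

lemma norm_e_frac [simp]: "norm (e_frac y m) = 1"
  by (simp add: e_frac_def)

lemma e_frac_multiple: "m > 0 \<Longrightarrow> e_frac (int m * t) m = 1"
  using cis_multiple_2pi[of "real_of_int t"] by (simp add: e_frac_def mult.assoc)

lemma e_frac_cong:
  assumes "m > 0" "[x = y] (mod int m)"
  shows "e_frac x m = e_frac y m"
proof -
  obtain t where "x = y + int m * t"
    using assms(2) by (metis cong_iff_lin cong_sym)
  then show ?thesis
    using e_frac_add e_frac_multiple[OF assms(1)] by simp
qed

lemma e_frac_mod: "m > 0 \<Longrightarrow> e_frac (x mod int m) m = e_frac x m"
  by (intro e_frac_cong) (auto simp: cong_def)

lemma e_frac_power_mod:
  "m > 0 \<Longrightarrow> e_frac (c * int (l mod m) ^ k) m = e_frac (c * int l ^ k) m"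
  by (intro e_frac_cong cong_scalar_left cong_pow) (auto simp: cong_def zmod_int)

lemma e_frac_mult_cancel: "d > 0 \<Longrightarrow> e_frac (x * int d) (m * d) = e_frac x m"
  by (simp add: e_frac_def mult_ac)

lemma e_frac_power: "e_frac (y * int t) m = e_frac y m ^ t"
  by (simp add: e_frac_def Complex.DeMoivre mult_ac)

lemma e_frac_eq_1_imp_dvd:
  assumes "m > 0" "e_frac y m = 1"
  shows "int m dvd y"
proof -
  obtain n where "2 * pi * real_of_int y / real m = 2 * pi * real_of_int n"
    using assms(2) by (auto simp: e_frac_def cis_conv_exp exp_eq_1)
  then have "real_of_int y = real m * real_of_int n"
    using assms(1) by (simp add: field_simps)
  then have "y = int m * n"
    by (metis of_int_eq_iff of_int_mult of_int_of_nat_eq)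
  then show ?thesis by simp
qed

lemma sum_e_frac_multiples_eq_0:
  assumes "m > 0" "\<not> int m dvd y"
  shows "(\<Sum>t<m. e_frac (y * int t) m) = 0"
proof -
  have "e_frac y m \<noteq> 1"
    using e_frac_eq_1_imp_dvd assms by blast
  moreover have "e_frac y m ^ m = 1"
    using e_frac_power[of y m m] e_frac_multiple[OF assms(1), of y] by (simp add: mult.commute)
  ultimately show ?thesis
    by (simp add: e_frac_power sum_gp_strict)
qed

lemma Sstar_eq_sum_totatives: "Sstar k q a = (\<Sum>l\<in>totatives q. e_frac (a * int l ^ k) q)"
proof -
  have "{l \<in> {1..q}. coprime l q} = totatives q"
    by (auto simp: totatives_def)
  then show ?thesis
    by (simp add: Sstar_def e_frac_def cis_conv_exp mult_ac)
qed

lemma norm_Sstar_le_totient: "norm (Sstar k q a) \<le> real (totient q)"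
proof -
  have "norm (Sstar k q a) \<le> (\<Sum>l\<in>totatives q. norm (e_frac (a * int l ^ k) q))"
    unfolding Sstar_eq_sum_totatives by (rule norm_sum)
  then show ?thesis by (simp add: totient_def)
qed

lemma sin_ge_half:
  fixes y :: real
  assumes "0 \<le> y" "y \<le> pi / 2"
  shows "y / 2 \<le> sin y"
proof -
  have taylor: "\<bar>sin y - (\<Sum>m<3. sin_coeff m * y ^ m)\<bar> \<le> inverse (fact 3) * \<bar>y\<bar> ^ 3"
    by (rule Maclaurin_sin_bound)
  have "(\<Sum>m<3. sin_coeff m * y ^ m) = y"
    by (simp add: numeral_3_eq_3 sin_coeff_def)
  moreover have "y\<^sup>2 \<le> 3"
  proof -
    have "y\<^sup>2 \<le> (pi / 2)\<^sup>2"
      using assms by (intro power_mono) auto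
    also have "\<dots> \<le> 1.6\<^sup>2"
      using pi_approx(2) by (intro power_mono) auto
    also have "\<dots> \<le> 3"
      by (simp add: power2_eq_square)
    finally show ?thesis .
  qed
  then have "inverse (fact 3) * \<bar>y\<bar> ^ 3 \<le> y / 2"
    using assms by (simp add: fact_numeral power3_eq_cube power2_eq_square field_simps mult_left_mono)
  ultimately show ?thesis
    using taylor by linarith
qed

lemma sin_pi_ratio_ge:
  fixes x p :: real
  assumes "0 \<le> x" "x \<le> p" "p > 0"
  shows "3 * min x (p - x) / (2 * p) \<le> sin (pi * x / p)"
proof -
  define y where "y = min x (p - x)"
  have y: "0 \<le> y" "2 * y \<le> p"
    using assms by (simp_all add: y_def min_def)
  have "sin (pi * x / p) = sin (pi * y / p)"
  proof (cases "y = x")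
    case False
    then have "pi * y / p = pi - pi * x / p"
      using assms by (auto simp: y_def min_def field_simps split: if_splits)
    then show ?thesis by simp
  qed simp
  moreover have "pi * y / p / 2 \<le> sin (pi * y / p)"
    using y assms by (intro sin_ge_half) (auto simp: field_simps)
  moreover have "3 * y / (2 * p) \<le> pi * y / p / 2"
    using mult_right_mono[of 3 pi y] y assms pi_gt3 by (simp add: field_simps)
  ultimately show ?thesis
    unfolding y_def by linarith
qed

lemma abs_sin_pi_ratio_ge:
  assumes "M > 0" "\<not> int M dvd n"
  shows "3 / (2 * real M) \<le> \<bar>sin (pi * real_of_int n / real M)\<bar>"
proof -
  define r where "r = n mod int M"
  have r: "0 < r" "r < int M"
    using assms by (auto simp: r_def dvd_eq_mod_eq_0[symmetric] order_le_neq_trans)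
  have "pi * real_of_int n / real M = pi * real_of_int r / real M + pi * of_int (n div int M)"
  proof -
    have "n = int M * (n div int M) + r"
      by (simp add: r_def)
    then have "real_of_int n = real M * real_of_int (n div int M) + real_of_int r"
      by (metis of_int_add of_int_mult of_int_of_nat_eq)
    then show ?thesis
      using assms(1) by (simp add: field_simps)
  qed
  then have "\<bar>sin (pi * real_of_int n / real M)\<bar> = \<bar>sin (pi * real_of_int r / real M)\<bar>"
    by (simp add: sin_add)
  moreover have "3 * min (real_of_int r) (real M - real_of_int r) / (2 * real M)
      \<le> sin (pi * real_of_int r / real M)"
    using r by (intro sin_pi_ratio_ge) auto
  moreover have "3 / (2 * real M) \<le> 3 * min (real_of_int r) (real M - real_of_int r) / (2 * real M)"
    using r assms(1) by (intro divide_right_mono) auto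
  ultimately show ?thesis by linarith
qed

lemma abs_sin_mono:
  fixes x y :: real
  assumes "\<bar>x\<bar> \<le> \<bar>y\<bar>" "\<bar>y\<bar> \<le> pi / 2"
  shows "\<bar>sin x\<bar> \<le> \<bar>sin y\<bar>"
proof -
  have abs_sin: "\<bar>sin t\<bar> = sin \<bar>t\<bar>" if "\<bar>t\<bar> \<le> pi" for t :: real
    using that sin_ge_zero[of t] sin_ge_zero[of "-t"] by (cases "t \<ge> 0") auto
  have "sin \<bar>x\<bar> \<le> sin \<bar>y\<bar>"
    using assms by (subst sin_mono_le_eq) auto
  then show ?thesis
    using assms pi_gt_zero abs_sin[of x] abs_sin[of y] by linarith
qed

lemma abs_cos_le_one_minus_sin_sq: "\<bar>cos x\<bar> \<le> 1 - (sin x)\<^sup>2 / 2" for x :: real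
proof (rule power2_le_imp_le)
  have "\<bar>cos x\<bar>\<^sup>2 = 1 - (sin x)\<^sup>2"
    by (simp only: power2_abs cos_squared_eq)
  moreover have "0 \<le> ((sin x)\<^sup>2)\<^sup>2"
    by simp
  ultimately show "\<bar>cos x\<bar>\<^sup>2 \<le> (1 - (sin x)\<^sup>2 / 2)\<^sup>2"
    by (simp add: power2_eq_square algebra_simps)
  have "(sin x)\<^sup>2 \<le> 1"
    by (simp add: abs_square_le_1)
  then show "0 \<le> 1 - (sin x)\<^sup>2 / 2" by simp
qed

lemma abs_cos_add_int_pi: "\<bar>cos (x + pi * of_int m)\<bar> = \<bar>cos x\<bar>"
  by (simp add: cos_add)

lemma abs_cos_le_cos_double: "\<bar>cos x\<bar> \<le> (3 + cos (2 * x)) / 4" for x :: real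
proof -
  have "0 \<le> (1 - \<bar>cos x\<bar>)\<^sup>2" by simp
  then show ?thesis
    unfolding cos_double_cos by (simp add: power2_eq_square algebra_simps abs_mult_self_eq)
qed

lemma power_eq_cos_imp_le:
  fixes W \<psi> :: real
  assumes "k > 0" "0 < W" "W ^ k = cos (real k * \<psi>)" "\<bar>real k * \<psi>\<bar> < pi / 2"
  shows "W \<le> 1 - (sin \<psi>)\<^sup>2 / (2 * real k)"
proof (rule ccontr)
  define y where "y = (sin \<psi>)\<^sup>2"
  have y: "0 \<le> y" "y \<le> 1"
    by (auto simp: y_def abs_square_le_1)
  have "\<bar>sin \<psi>\<bar> \<le> \<bar>sin (real k * \<psi>)\<bar>"
    using assms(1,4) by (intro abs_sin_mono) (auto simp: abs_mult mult_le_cancel_right1)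
  then have "y \<le> (sin (real k * \<psi>))\<^sup>2"
    by (simp add: y_def abs_le_square_iff)
  moreover have "W ^ (2 * k) = 1 - (sin (real k * \<psi>))\<^sup>2"
    by (simp add: power_mult mult.commute[of 2] assms(3) cos_squared_eq)
  ultimately have W2k: "W ^ (2 * k) \<le> 1 - y" by linarith
  assume "\<not> W \<le> 1 - y / (2 * real k)"
  then have "1 - y / (2 * real k) < W" by simp
  moreover have "0 \<le> 1 - y / (2 * real k)"
    using y assms(1) by (simp add: field_simps)
  moreover have "1 - y \<le> (1 - y / (2 * real k)) ^ (2 * k)"
    using Bernoulli_inequality[of "- (y / (2 * real k))" "2 * k"] y assms(1) by (simp add: field_simps)
  ultimately have "1 - y < W ^ (2 * k)"
    using assms(1) power_strict_mono[of "1 - y / (2 * real k)" W "2 * k"] by linarith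
  then show False
    using W2k by (simp add: y_def)
qed

lemma abs_sin_diff_ge:
  fixes q \<alpha> \<psi> :: real
  assumes "q \<ge> 1" "3 / (2 * q) \<le> \<bar>sin \<alpha>\<bar>" "\<bar>sin \<psi>\<bar> < 1 / (4 * q)" "0 \<le> cos \<psi>"
  shows "1 / q \<le> \<bar>sin (\<alpha> - \<psi>)\<bar>"
proof -
  have "\<bar>sin \<psi>\<bar> \<le> \<bar>1 / (4 * q)\<bar>"
    using assms(1,3) by simp
  then have "(sin \<psi>)\<^sup>2 \<le> (1 / (4 * q))\<^sup>2"
    by (simp only: abs_le_square_iff)
  moreover have "(cos \<psi>)\<^sup>2 \<le> cos \<psi>"
    using assms(4) cos_le_one[of \<psi>] by (simp add: power2_eq_square mult_left_le_one_le)
  ultimately have cos_\<psi>: "1 - 1 / (16 * q\<^sup>2) \<le> cos \<psi>"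
    by (simp add: cos_squared_eq power_divide power_mult_distrib)
  have "\<bar>sin \<alpha>\<bar> * cos \<psi> - \<bar>sin \<psi>\<bar> \<le> \<bar>sin (\<alpha> - \<psi>)\<bar>"
  proof -
    have "\<bar>sin \<alpha> * cos \<psi>\<bar> - \<bar>cos \<alpha> * sin \<psi>\<bar> \<le> \<bar>sin (\<alpha> - \<psi>)\<bar>"
      unfolding sin_diff by (rule abs_triangle_ineq2)
    moreover have "\<bar>cos \<alpha> * sin \<psi>\<bar> \<le> \<bar>sin \<psi>\<bar>"
      by (simp add: abs_mult mult_left_le_one_le)
    ultimately show ?thesis
      using assms(4) by (simp add: abs_mult)
  qed
  moreover have "3 / (2 * q) * (1 - 1 / (16 * q\<^sup>2)) \<le> \<bar>sin \<alpha>\<bar> * cos \<psi>"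
  proof (intro mult_mono)
    have "1 \<le> q\<^sup>2"
      using assms(1) by (simp add: one_le_power)
    then show "0 \<le> 1 - 1 / (16 * q\<^sup>2)"
      by (simp add: divide_le_eq)
  qed (use assms(1,2) cos_\<psi> in auto)
  moreover have "1 / q \<le> 3 / (2 * q) * (1 - 1 / (16 * q\<^sup>2)) - 1 / (4 * q)"
    using assms(1) mult_mono[of 1 q 1 q] by (simp add: field_simps power2_eq_square)
  ultimately show ?thesis
    using assms(3) by linarith
qed

lemma mult_abs_cos_diff_le:
  fixes W \<psi> \<alpha> :: real and k q :: nat
  assumes "k > 0" "q > 0" "0 < W" "W \<le> 1" "W ^ k = cos (real k * \<psi>)"
    "\<bar>real k * \<psi>\<bar> < pi / 2" "3 / (2 * real q) \<le> \<bar>sin \<alpha>\<bar>"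
  shows "W * \<bar>cos (\<alpha> - \<psi>)\<bar> \<le> 1 - 1 / (32 * real k * (real q)\<^sup>2)"
proof (cases "1 / (4 * real q) \<le> \<bar>sin \<psi>\<bar>")
  case True
  then have "(1 / (4 * real q))\<^sup>2 \<le> (sin \<psi>)\<^sup>2"
    by (simp add: abs_le_square_iff[symmetric])
  then have "1 / (16 * (real q)\<^sup>2) / (2 * real k) \<le> (sin \<psi>)\<^sup>2 / (2 * real k)"
    by (intro divide_right_mono) (auto simp: power_divide power_mult_distrib)
  then have "W \<le> 1 - 1 / (32 * real k * (real q)\<^sup>2)"
    using power_eq_cos_imp_le[OF assms(1,3,5,6)] by (simp add: mult_ac)
  moreover have "W * \<bar>cos (\<alpha> - \<psi>)\<bar> \<le> W"
    using assms(3) by (simp add: mult_left_le)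
  ultimately show ?thesis by linarith
next
  case False
  have "\<bar>\<psi>\<bar> \<le> \<bar>real k * \<psi>\<bar>"
    using assms(1) by (simp add: abs_mult mult_le_cancel_right1)
  then have "\<bar>\<psi>\<bar> \<le> pi / 2"
    using assms(6) by linarith
  then have "0 \<le> cos \<psi>"
    by (intro cos_ge_zero) auto
  then have "1 / real q \<le> \<bar>sin (\<alpha> - \<psi>)\<bar>"
    using False assms(2,7) by (intro abs_sin_diff_ge) auto
  then have "(1 / real q)\<^sup>2 \<le> (sin (\<alpha> - \<psi>))\<^sup>2"
    by (simp add: abs_le_square_iff[symmetric])
  then have "\<bar>cos (\<alpha> - \<psi>)\<bar> \<le> 1 - 1 / (2 * (real q)\<^sup>2)"
    using abs_cos_le_one_minus_sin_sq[of "\<alpha> - \<psi>"] by (simp add: power_divide)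
  moreover have "1 / (32 * real k * (real q)\<^sup>2) \<le> 1 / (2 * (real q)\<^sup>2)"
    using assms(1,2) by (intro divide_left_mono mult_right_mono) auto
  moreover have "W * \<bar>cos (\<alpha> - \<psi>)\<bar> \<le> \<bar>cos (\<alpha> - \<psi>)\<bar>"
    using assms(3,4) by (intro mult_left_le_one_le) auto
  ultimately show ?thesis by linarith
qed

lemma Re_cis_div_root:
  fixes z :: complex
  assumes "Re z = 1" "k > 0"
  obtains W \<psi> :: real where
    "\<And>x. Re (cis x / z powr (1 / of_nat k)) = W * cos (x - \<psi>)"
    "0 < W" "W \<le> 1" "W ^ k = cos (real k * \<psi>)" "\<bar>real k * \<psi>\<bar> < pi / 2"
proof
  \<comment> \<open>\<open>W = \<bar>z\<bar>\<^bsup>-1/k\<^esup>\<close> and \<open>\<psi> = arg z / k\<close>; \<open>Re z = 1\<close> is \<open>\<bar>z\<bar> cos (arg z) = 1\<close>\<close>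
  define L where "L = Ln z"
  have "z \<noteq> 0"
    using assms(1) by auto
  then have z: "z = exp L" and root: "z powr (1 / of_nat k) = exp (L / of_nat k)"
    by (simp_all add: L_def powr_def)
  have cos_Im_L: "cos (Im L) = exp (- Re L)"
    using assms(1) by (simp add: z Re_exp exp_minus field_simps)
  have "exp (- Re L) \<le> 1"
    by (metis cos_Im_L cos_le_one)
  then have "0 \<le> Re L" by simp
  fix x
  have "cis x / z powr (1 / of_nat k) = exp (\<i> * x - L / of_nat k)"
    by (simp add: root cis_conv_exp exp_diff)
  then show "Re (cis x / z powr (1 / of_nat k)) = exp (- Re L / real k) * cos (x - Im L / real k)"
    by (simp add: Re_exp)
  show "0 < exp (- Re L / real k)" by simp
  show "exp (- Re L / real k) \<le> 1"
    using \<open>0 \<le> Re L\<close> assms(2) by simp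
  show "exp (- Re L / real k) ^ k = cos (real k * (Im L / real k))"
    using assms(2) cos_Im_L exp_divide_power_eq[of k "- Re L"] by simp
  show "\<bar>real k * (Im L / real k)\<bar> < pi / 2"
    using assms Re_Ln_pos_lt_imp[of z] by (simp add: L_def)
qed

lemma Re_Sstar_div_root:
  fixes z :: complex
  assumes "Re z = 1" "k > 0"
  obtains W \<psi> :: real where
    "Re (Sstar k q a / z powr (1 / of_nat k))
       = W * (\<Sum>l\<in>totatives q. cos (2 * pi * real_of_int (a * int l ^ k) / real q - \<psi>))"
    "0 < W" "W \<le> 1" "W ^ k = cos (real k * \<psi>)" "\<bar>real k * \<psi>\<bar> < pi / 2"
proof -
  obtain W \<psi> where Re_eq: "\<And>x. Re (cis x / z powr (1 / of_nat k)) = W * cos (x - \<psi>)"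
    and "0 < W" "W \<le> 1" "W ^ k = cos (real k * \<psi>)" "\<bar>real k * \<psi>\<bar> < pi / 2"
    using Re_cis_div_root[OF assms] by blast
  moreover have "Re (Sstar k q a / z powr (1 / of_nat k))
       = W * (\<Sum>l\<in>totatives q. cos (2 * pi * real_of_int (a * int l ^ k) / real q - \<psi>))"
    unfolding Sstar_eq_sum_totatives e_frac_def sum_divide_distrib Re_sum Re_eq
    by (simp add: sum_distrib_left)
  ultimately show ?thesis using that by blast
qed

lemma power_one_plus_cong:
  fixes m x :: int
  assumes "m dvd x\<^sup>2"
  shows "[(1 + x) ^ k = 1 + int k * x] (mod m)"
proof -
  have "x\<^sup>2 dvd (1 + x) ^ k - (1 + int k * x)"
  proof (induction k)
    case (Suc k)
    then obtain t where "(1 + x) ^ k - (1 + int k * x) = x\<^sup>2 * t"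
      by (rule dvdE)
    then have "(1 + x) ^ k = 1 + int k * x + x\<^sup>2 * t"
      by simp
    then have "(1 + x) ^ Suc k - (1 + int (Suc k) * x) = x\<^sup>2 * ((1 + x) * t + int k)"
      by (simp add: algebra_simps power2_eq_square)
    then show ?case by simp
  qed simp
  then show ?thesis
    using assms by (simp add: cong_iff_dvd_diff dvd_trans)
qed

lemma mod_in_totatives: "q > 1 \<Longrightarrow> coprime l q \<Longrightarrow> l mod q \<in> totatives q"
  by (auto simp: in_totatives_iff mod_greater_zero_iff_not_dvd coprime_mod_left_iff
      dest: coprime_common_divisor[of l q q])

lemma dvd_power_minus_one_mod:
  "int q dvd c * (int (l mod q) ^ k - 1) \<longleftrightarrow> int q dvd c * (int l ^ k - 1)"
proof -
  have "[int (l mod q) ^ k = int l ^ k] (mod int q)"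
    by (intro cong_pow) (simp add: cong_def zmod_int)
  then have "[c * (int (l mod q) ^ k - 1) = c * (int l ^ k - 1)] (mod int q)"
    by (intro cong_scalar_left cong_diff) auto
  then show ?thesis
    by (rule cong_dvd_iff)
qed

lemma coprime_add_mult_left_iff: "coprime (n + c * m) m \<longleftrightarrow> coprime n m" for n c m :: nat
proof -
  have "gcd (n + c * m) m = gcd m (c * m + n)"
    unfolding add.commute[of n "c * m"] by (rule gcd.commute)
  also have "\<dots> = gcd n m"
    unfolding gcd_add_mult by (rule gcd.commute)
  finally show ?thesis
    by (simp only: coprime_iff_gcd_eq_1)
qed

lemma le_of_dvd_power_add_two:
  assumes "k > 0" "int m dvd 2 * (int (m + 2) ^ k - 1)"
  shows "m \<le> 2 ^ (k + 1)"
proof -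
  have "[2 * (int (m + 2) ^ k - 1) = 2 * (2 ^ k - 1)] (mod int m)"
    by (intro cong_scalar_left cong_diff cong_pow) (auto simp: cong_def)
  then have "int m dvd 2 * (2 ^ k - 1)"
    using assms(2) cong_dvd_iff by blast
  moreover have "(0::int) < 2 * (2 ^ k - 1)"
    using assms(1) by simp
  ultimately have "int m \<le> 2 * (2 ^ k - 1)"
    by (rule zdvd_imp_le)
  then have "int m \<le> int (2 ^ (k + 1))"
    by simp
  then show ?thesis
    by (simp only: of_nat_le_iff)
qed

lemma two_power_le_of_dvd_power_one_plus:
  assumes "k > 0" "odd m" "2 \<le> E"
    and "(2::int) ^ E dvd 2 * ((1 + 2 ^ (E div 2) * int m) ^ k - 1)"
  shows "(2::nat) ^ E \<le> 4 * k\<^sup>2"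
proof -
  define j where "j = E div 2"
  define x where "x = 2 ^ j * int m"
  have "(2::int) ^ (E - 1) dvd 2 ^ (2 * j)"
    by (simp add: j_def le_imp_power_dvd)
  also have "\<dots> dvd x\<^sup>2"
    by (simp add: x_def power_mult_distrib power_mult[symmetric] mult.commute[of 2])
  finally have cong: "[(1 + x) ^ k = 1 + int k * x] (mod 2 ^ (E - 1))"
    by (rule power_one_plus_cong)
  have "(2::int) ^ (E - 1) dvd (1 + x) ^ k - 1"
  proof -
    have "(2::int) ^ E = 2 * 2 ^ (E - 1)"
      using assms(3) by (cases E) auto
    then have "(2::int) * 2 ^ (E - 1) dvd 2 * ((1 + x) ^ k - 1)"
      using assms(4) by (simp add: x_def j_def)
    then show ?thesis
      by (subst (asm) dvd_mult_cancel_left) simp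
  qed
  then have "(2::int) ^ (E - 1) dvd ((1 + x) ^ k - 1) - ((1 + x) ^ k - (1 + int k * x))"
    using cong unfolding cong_iff_dvd_diff by (rule dvd_diff)
  then have "(2::int) ^ (E - 1) dvd int k * x"
    by simp
  moreover have "(2::int) ^ (E - 1) = 2 ^ j * 2 ^ (E - 1 - j)"
    using assms(3) by (simp add: j_def flip: power_add)
  ultimately have "(2::int) ^ (E - 1 - j) dvd int k * int m"
    by (simp add: x_def mult.left_commute[of "int k"])
  moreover have "coprime ((2::int) ^ (E - 1 - j)) (int m)"
    using assms(2) by (simp add: coprime_power_left_iff)
  ultimately have "(2::int) ^ (E - 1 - j) dvd int k"
    by (simp add: coprime_dvd_mult_left_iff)
  then have "(2::nat) ^ (E - 1 - j) \<le> k"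
    using assms(1) by (metis dvd_imp_le of_nat_dvd_iff of_nat_numeral of_nat_power)
  have "(2::nat) ^ E \<le> 2 ^ (2 * (E - 1 - j) + 2)"
    using assms(3) by (intro power_increasing) (auto simp: j_def)
  also have "\<dots> = 4 * (2 ^ (E - 1 - j))\<^sup>2"
    by (simp add: power_add power_mult[symmetric] mult.commute)
  also have "\<dots> \<le> 4 * k\<^sup>2"
    using \<open>2 ^ (E - 1 - j) \<le> k\<close> by (intro mult_left_mono power_mono) auto
  finally show ?thesis .
qed

lemma degenerate_modulus_le:
  assumes "k > 0" "q > 1"
    and degenerate: "\<forall>l\<in>totatives q. int q dvd 2 * (int l ^ k - 1)"
  shows "q \<le> k\<^sup>2 * 2 ^ (k + 3)"
proof -
  have dvd: "int q dvd 2 * (int l ^ k - 1)" if "coprime l q" for l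
    using degenerate mod_in_totatives[OF assms(2) that] dvd_power_minus_one_mod by blast
  define E where "E = multiplicity 2 q"
  obtain m where q: "q = 2 ^ E * m" and m: "odd m"
    using multiplicity_decompose'[of q 2] assms(2) unfolding E_def by auto
  have "coprime (m + 2) q"
    using m coprime_add_mult_left_iff[of 2 1 m] by (simp add: q)
  then have "int q dvd 2 * (int (m + 2) ^ k - 1)"
    by (rule dvd)
  then have "int m dvd 2 * (int (m + 2) ^ k - 1)"
    by (rule dvd_trans[rotated]) (simp add: q)
  then have m_le: "m \<le> 2 ^ (k + 1)"
    by (rule le_of_dvd_power_add_two[OF assms(1)])
  have E_le: "(2::nat) ^ E \<le> 4 * k\<^sup>2"
  proof (cases "E \<le> 1")
    case True
    then have "(2::nat) ^ E \<le> 2 ^ 1"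
      by (intro power_increasing) auto
    also have "\<dots> \<le> 4 * k\<^sup>2"
      using assms(1) by (simp add: Suc_le_eq)
    finally show ?thesis .
  next
    case False
    have "coprime (1 + 2 ^ (E div 2) * m) q"
      using m False coprime_add_mult_left_iff[of 1 "2 ^ (E div 2)" m] by (simp add: q)
    then have "int q dvd 2 * (int (1 + 2 ^ (E div 2) * m) ^ k - 1)"
      by (rule dvd)
    then have "int (2 ^ E) dvd 2 * (int (1 + 2 ^ (E div 2) * m) ^ k - 1)"
      by (rule dvd_trans[rotated]) (simp add: q)
    then show ?thesis
      using assms(1) m False by (intro two_power_le_of_dvd_power_one_plus) auto
  qed
  have "q \<le> 4 * k\<^sup>2 * 2 ^ (k + 1)"
    unfolding q using E_le m_le by (intro mult_mono) auto
  then show ?thesis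
    by (simp add: power_add)
qed

lemma bij_betw_mult_mod_totatives:
  assumes "M > 1" "coprime u M"
  shows "bij_betw (\<lambda>v. v * u mod M) (totatives M) (totatives M)"
proof -
  have maps_to: "(\<lambda>v. v * u mod M) ` totatives M \<subseteq> totatives M"
    using assms by (auto intro!: mod_in_totatives simp: in_totatives_iff)
  have "inj_on (\<lambda>v. v * u mod M) (totatives M)"
  proof (rule inj_onI)
    fix x y
    assume xy: "x \<in> totatives M" "y \<in> totatives M" "x * u mod M = y * u mod M"
    then have "[x = y] (mod M)"
      using assms(2) by (simp add: cong_def[symmetric] cong_mult_rcancel_nat coprime_commute)
    moreover have "x < M" "y < M"
      using xy assms(1) by (simp_all add: totatives_less)
    ultimately show "x = y"
      by (simp add: cong_def)
  qed
  then show ?thesis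
    using maps_to by (simp add: bij_betw_def endo_inj_surj)
qed

lemma Sstar_mult_unit_power:
  assumes "M > 1" "coprime u M"
  shows "Sstar k M (c * int u ^ k) = Sstar k M c"
proof -
  have "Sstar k M c = (\<Sum>v\<in>totatives M. e_frac (c * int (v * u mod M) ^ k) M)"
    unfolding Sstar_eq_sum_totatives
    using sum.reindex_bij_betw[OF bij_betw_mult_mod_totatives[OF assms], of "\<lambda>l. e_frac (c * int l ^ k) M"]
    by simp
  also have "\<dots> = Sstar k M (c * int u ^ k)"
    unfolding Sstar_eq_sum_totatives using assms(1)
    by (simp add: e_frac_power_mod power_mult_distrib mult_ac)
  finally show ?thesis ..
qed

lemma Sstar_eq_sum_twisted:
  assumes "M > 1" "M = d * r" "M dvd r * r"
  shows "Sstar k M c = (\<Sum>v\<in>totatives M. e_frac (c * int v ^ k) M * e_frac (c * int k * int v ^ k * int t) d)"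
proof -
  \<comment> \<open>reindex by the unit \<open>1 + tr\<close>, whose \<open>k\<close>-th power is \<open>1 + ktr\<close> modulo \<open>M\<close> since \<open>M | r\<^sup>2\<close>\<close>
  have pos: "d > 0" "r > 0"
    using assms(1,2) by (auto intro: gr0I)
  have "coprime (1 + t * r) (r * r)"
    using coprime_add_mult_left_iff[of 1 t r] by simp
  then have "coprime (1 + t * r) M"
    by (rule coprime_divisors[OF dvd_refl assms(3)])
  then have "Sstar k M c = Sstar k M (c * int (1 + t * r) ^ k)"
    by (rule Sstar_mult_unit_power[OF assms(1), symmetric])
  also have "\<dots> = (\<Sum>v\<in>totatives M. e_frac (c * int v ^ k) M * e_frac (c * int k * int v ^ k * int t) d)"
    unfolding Sstar_eq_sum_totatives
  proof (intro sum.cong refl)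
    fix v
    have "int M dvd (int t * int r)\<^sup>2"
      using assms(3) by (metis of_nat_dvd_iff of_nat_mult power2_eq_square dvd_mult mult.commute mult.left_commute)
    then have "[c * int (1 + t * r) ^ k * int v ^ k = c * int v ^ k * (1 + int k * (int t * int r))] (mod int M)"
      by (auto simp: mult_ac intro!: cong_scalar_left power_one_plus_cong)
    then have "e_frac (c * int (1 + t * r) ^ k * int v ^ k) M
        = e_frac (c * int v ^ k + (c * int k * int v ^ k * int t) * int r) (d * r)"
      using assms(2) pos by (subst e_frac_cong) (auto simp: algebra_simps)
    also have "\<dots> = e_frac (c * int v ^ k) M * e_frac (c * int k * int v ^ k * int t) d"
      using assms(2) pos by (simp add: e_frac_add e_frac_mult_cancel)
    finally show "e_frac (c * int (1 + t * r) ^ k * int v ^ k) M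
        = e_frac (c * int v ^ k) M * e_frac (c * int k * int v ^ k * int t) d" .
  qed
  finally show ?thesis .
qed

lemma Sstar_eq_0_of_square_dvd:
  assumes "d > 0" "d * d dvd M" "\<not> int d dvd c * int k"
  shows "Sstar k M c = 0"
proof (cases "M = 0")
  case False
  obtain s where "M = d * d * s"
    using assms(2) by (rule dvdE)
  then have M: "M = d * (d * s)"
    by (simp add: mult.assoc)
  have "d \<noteq> 1"
    using assms(3) by auto
  then have "2 \<le> d" "1 \<le> d * s"
    using False assms(1) by (auto simp: M)
  then have "2 * 1 \<le> M"
    unfolding M by (rule mult_le_mono)
  then have "M > 1"
    by simp
  \<comment> \<open>averaging the twisted form over \<open>t < d\<close> kills every term\<close>
  have "of_nat d * Sstar k M c
      = (\<Sum>t<d. \<Sum>v\<in>totatives M. e_frac (c * int v ^ k) M * e_frac (c * int k * int v ^ k * int t) d)"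
    using Sstar_eq_sum_twisted[OF \<open>M > 1\<close> M, of k c] by (simp add: M)
  also have "\<dots> = (\<Sum>v\<in>totatives M. e_frac (c * int v ^ k) M * (\<Sum>t<d. e_frac (c * int k * int v ^ k * int t) d))"
    by (subst sum.swap) (simp add: sum_distrib_left)
  also have "\<dots> = 0"
  proof (intro sum.neutral ballI)
    fix v
    assume "v \<in> totatives M"
    then have "coprime (int d) (int v ^ k)"
      by (auto simp: in_totatives_iff M coprime_commute)
    then have "\<not> int d dvd c * int k * int v ^ k"
      using assms(3) by (simp add: coprime_dvd_mult_left_iff)
    then show "e_frac (c * int v ^ k) M * (\<Sum>t<d. e_frac (c * int k * int v ^ k * int t) d) = 0"
      using sum_e_frac_multiples_eq_0[OF assms(1)] by simp
  qed
  finally show ?thesis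
    using assms(1) by simp
qed (simp add: Sstar_eq_sum_totatives)

lemma e_frac_crt:
  assumes "m1 > 0" "m2 > 0"
  shows "e_frac (x * int m2 + y * int m1) (m1 * m2) = e_frac x m1 * e_frac y m2"
  using assms e_frac_mult_cancel[of m2 x m1] e_frac_mult_cancel[of m1 y m2]
  by (simp add: e_frac_add mult.commute[of m2 m1])

lemma Sstar_mult_coprime:
  assumes "m1 > 1" "m2 > 1" "coprime m1 m2"
  obtains u w where "Sstar k (m1 * m2) c = Sstar k m1 (c * u) * Sstar k m2 (c * w)"
    and "coprime u (int m1)"
proof -
  obtain u w where "u * int m2 + w * int m1 = gcd (int m2) (int m1)"
    using bezout_int by blast
  then have uw: "u * int m2 + w * int m1 = 1"
    using assms(3) by (simp add: coprime_commute)
  have "coprime u (int m1)"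
  proof (rule coprimeI)
    fix d
    assume "d dvd u" "d dvd int m1"
    then have "d dvd u * int m2 + w * int m1"
      by simp
    then show "is_unit d"
      using uw by simp
  qed
  define F where "F x y = e_frac (c * u * int x ^ k) m1 * e_frac (c * w * int y ^ k) m2" for x y
  have split: "e_frac (c * int l ^ k) (m1 * m2) = F (l mod m1) (l mod m2)" for l
  proof -
    have "c * int l ^ k = c * int l ^ k * (u * int m2 + w * int m1)"
      using uw by simp
    also have "\<dots> = (c * u * int l ^ k) * int m2 + (c * w * int l ^ k) * int m1"
      by (simp add: algebra_simps)
    finally have "e_frac (c * int l ^ k) (m1 * m2) = e_frac (c * u * int l ^ k) m1 * e_frac (c * w * int l ^ k) m2"
      using assms(1,2) by (simp add: e_frac_crt)
    then show ?thesis
      using assms(1,2) by (simp add: F_def e_frac_power_mod)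
  qed
  have "Sstar k (m1 * m2) c = (\<Sum>l\<in>totatives (m1 * m2). F (l mod m1) (l mod m2))"
    unfolding Sstar_eq_sum_totatives split ..
  also have "\<dots> = (\<Sum>p\<in>totatives m1 \<times> totatives m2. F (fst p) (snd p))"
    using sum.reindex_bij_betw[OF bij_betw_totatives[OF assms], of "\<lambda>p. F (fst p) (snd p)"] by simp
  also have "\<dots> = Sstar k m1 (c * u) * Sstar k m2 (c * w)"
    unfolding Sstar_eq_sum_totatives F_def sum_product sum.cartesian_product
    by (simp add: case_prod_beta')
  finally show ?thesis
    using that \<open>coprime u (int m1)\<close> by blast
qed

lemma norm_one_plus_e_frac_le:
  assumes "M > 0" "\<not> int M dvd n"
  shows "norm (1 + e_frac n M) \<le> 2 - 2 / (real M)\<^sup>2"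
proof (rule power2_le_imp_le)
  define \<theta> where "\<theta> = pi * real_of_int n / real M"
  have "3 / (2 * real M) \<le> \<bar>sin \<theta>\<bar>"
    unfolding \<theta>_def by (rule abs_sin_pi_ratio_ge[OF assms])
  then have sin_sq: "(3 / (2 * real M))\<^sup>2 \<le> (sin \<theta>)\<^sup>2"
    using assms(1) by (simp add: abs_le_square_iff[symmetric])
  have "(norm (1 + e_frac n M))\<^sup>2 = (1 + cos (2 * \<theta>))\<^sup>2 + (sin (2 * \<theta>))\<^sup>2"
    by (simp add: e_frac_def \<theta>_def cmod_power2 mult_ac)
  also have "\<dots> = 2 + 2 * cos (2 * \<theta>)"
    by (simp add: power2_eq_square algebra_simps sin_squared_eq[of "2 * \<theta>", unfolded power2_eq_square])
  also have "\<dots> = 4 - 4 * (sin \<theta>)\<^sup>2"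
    by (simp add: cos_double_sin)
  also have "\<dots> \<le> 4 - 4 * (3 / (2 * real M))\<^sup>2"
    using sin_sq by simp
  also have "\<dots> \<le> (2 - 2 / (real M)\<^sup>2)\<^sup>2"
    using assms(1) by (simp add: power2_eq_square field_simps)
  finally show "(norm (1 + e_frac n M))\<^sup>2 \<le> (2 - 2 / (real M)\<^sup>2)\<^sup>2" .
  have "1 \<le> (real M)\<^sup>2"
    using assms(1) by (simp add: one_le_power)
  then show "0 \<le> 2 - 2 / (real M)\<^sup>2"
    by (simp add: divide_le_eq)
qed

lemma norm_Sstar_le_totient_minus:
  assumes "M > 0" "v \<in> totatives M" "\<not> int M dvd c * (int v ^ k - 1)"
  shows "norm (Sstar k M c) \<le> real (totient M) - 2 / (real M)\<^sup>2"
proof -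
  \<comment> \<open>the terms at \<open>1\<close> and \<open>v\<close> have different phases\<close>
  have "v \<noteq> 1"
    using assms(3) by auto
  have one: "1 \<in> totatives M"
    using assms(1) by simp
  define T where "T = totatives M - {1, v}"
  have tot: "totatives M = insert 1 (insert v T)" and "1 \<notin> insert v T" "v \<notin> T" "finite T"
    using assms(2) one \<open>v \<noteq> 1\<close> by (auto simp: T_def)
  then have "Sstar k M c = e_frac c M + e_frac (c * int v ^ k) M + (\<Sum>l\<in>T. e_frac (c * int l ^ k) M)"
    unfolding Sstar_eq_sum_totatives tot by (simp add: add.assoc)
  moreover have "e_frac (c * int v ^ k) M = e_frac c M * e_frac (c * (int v ^ k - 1)) M"
    by (simp add: algebra_simps flip: e_frac_add)
  ultimately have "Sstar k M c = e_frac c M * (1 + e_frac (c * (int v ^ k - 1)) M) + (\<Sum>l\<in>T. e_frac (c * int l ^ k) M)"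
    by (simp add: algebra_simps)
  then have "norm (Sstar k M c)
      \<le> norm (e_frac c M * (1 + e_frac (c * (int v ^ k - 1)) M)) + norm (\<Sum>l\<in>T. e_frac (c * int l ^ k) M)"
    by (simp only: norm_triangle_ineq)
  also have "\<dots> \<le> (2 - 2 / (real M)\<^sup>2) + real (card T)"
  proof (rule add_mono)
    show "norm (e_frac c M * (1 + e_frac (c * (int v ^ k - 1)) M)) \<le> 2 - 2 / (real M)\<^sup>2"
      using norm_one_plus_e_frac_le[OF assms(1,3)] by (simp add: norm_mult)
    show "norm (\<Sum>l\<in>T. e_frac (c * int l ^ k) M) \<le> real (card T)"
      using norm_sum[of "\<lambda>l. e_frac (c * int l ^ k) M" T] by simp
  qed
  also have "real (card T) = real (totient M) - 2"
  proof -
    have "card {1, v} \<le> totient M"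
      unfolding totient_def using assms(2) one by (intro card_mono) auto
    then show ?thesis
      using assms(2) one \<open>v \<noteq> 1\<close> by (simp add: T_def totient_def card_Diff_subset of_nat_diff)
  qed
  finally show ?thesis by simp
qed

lemma card_power_residue_fiber_le:
  assumes "prime p" "k > 0" "\<not> int p dvd c"
  shows "card {v \<in> totatives p. (c * int v ^ k) mod int p = int r} \<le> k"
proof -
  have "prime (int p)"
    using assms(1) by simp
  then have "coprime (int p) c"
    using assms(3) by (rule prime_imp_coprime)
  then have "coprime c (int p)"
    by (simp add: coprime_commute)
  then obtain c' where c': "[c * c' = 1] (mod int p)"
    using cong_solve_coprime_int by blast
  define r' where "r' = nat ((int r * c') mod int p)"
  have r': "int r' = (int r * c') mod int p"
    using assms(1) by (simp add: r'_def prime_gt_0_nat)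
  \<comment> \<open>multiplying by the inverse \<open>c'\<close> turns the fibre into a set of \<open>k\<close>-th roots of \<open>r'\<close>\<close>
  have "{v \<in> totatives p. (c * int v ^ k) mod int p = int r} \<subseteq> {x \<in> {..<p}. [x ^ k = r'] (mod p)}"
  proof safe
    fix v
    assume v: "v \<in> totatives p" and r: "(c * int v ^ k) mod int p = int r"
    show "v < p"
      using v prime_gt_1_nat[OF assms(1)] by (simp add: totatives_less)
    have "[c * int v ^ k = int r] (mod int p)"
      using r by (metis cong_def mod_mod_trivial)
    then have "[c' * (c * int v ^ k) = c' * int r] (mod int p)"
      by (rule cong_scalar_left)
    moreover have "[c' * (c * int v ^ k) = int v ^ k] (mod int p)"
      using cong_scalar_right[OF c', of "int v ^ k"] by (simp add: mult_ac)
    ultimately have "[int v ^ k = int r'] (mod int p)"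
      by (metis r' cong_def cong_sym cong_trans mult.commute mod_mod_trivial)
    then show "[v ^ k = r'] (mod p)"
      by (simp flip: cong_int_iff)
  qed
  then have "card {v \<in> totatives p. (c * int v ^ k) mod int p = int r} \<le> card {x \<in> {..<p}. [x ^ k = r'] (mod p)}"
    by (intro card_mono) auto
  also have "\<dots> \<le> k"
    by (rule roots_mod_prime_bound[OF assms(1,2)])
  finally show ?thesis .
qed

lemma Re_mult_cnj_eq:
  fixes u \<eta> :: complex
  assumes "norm u = 1" "norm \<eta> = 1"
  shows "Re (u * cnj \<eta>) = 1 - (norm (u - \<eta>))\<^sup>2 / 2"
proof -
  have "(Re u)\<^sup>2 + (Im u)\<^sup>2 = 1" "(Re \<eta>)\<^sup>2 + (Im \<eta>)\<^sup>2 = 1"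
    using assms by (simp_all add: cmod_power2[symmetric])
  moreover have "(norm (u - \<eta>))\<^sup>2 = (Re u - Re \<eta>)\<^sup>2 + (Im u - Im \<eta>)\<^sup>2"
    by (simp add: cmod_power2)
  ultimately show ?thesis
    by (simp add: power2_eq_square algebra_simps; simp add: field_simps)
qed

lemma norm_e_frac_sub_one_ge:
  assumes "p > 0" "y < p"
  shows "3 * min (real y) (real p - real y) / real p \<le> norm (e_frac (int y) p - 1)"
proof -
  define \<theta> where "\<theta> = pi * real y / real p"
  have "0 \<le> sin \<theta>"
    using assms by (intro sin_ge_zero) (auto simp: \<theta>_def field_simps)
  have "(norm (e_frac (int y) p - 1))\<^sup>2 = (cos (2 * \<theta>) - 1)\<^sup>2 + (sin (2 * \<theta>))\<^sup>2"
    by (simp add: e_frac_def \<theta>_def cmod_power2 mult_ac)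
  also have "\<dots> = 2 - 2 * cos (2 * \<theta>)"
    by (simp add: power2_eq_square algebra_simps sin_squared_eq[of "2 * \<theta>", unfolded power2_eq_square])
  also have "\<dots> = (2 * sin \<theta>)\<^sup>2"
    by (simp add: cos_double_sin power2_eq_square)
  finally have "norm (e_frac (int y) p - 1) = 2 * sin \<theta>"
    by (rule power2_eq_imp_eq) (use \<open>0 \<le> sin \<theta>\<close> in auto)
  moreover have "3 * min (real y) (real p - real y) / (2 * real p) \<le> sin \<theta>"
    unfolding \<theta>_def using assms by (intro sin_pi_ratio_ge) auto
  ultimately show ?thesis
    by simp
qed

lemma e_frac_near_diff_mod:
  assumes "p > 0" "r0 < p"
    and "norm (e_frac (int r) p - \<eta>) < 3 * (real D + 1) / (2 * real p)"
    and "norm (e_frac (int r0) p - \<eta>) < 3 * (real D + 1) / (2 * real p)"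
  shows "(r + p - r0) mod p \<in> {..D} \<union> {p - D..<p}"
proof (rule ccontr)
  define y where "y = (r + p - r0) mod p"
  assume "y \<notin> {..D} \<union> {p - D..<p}"
  moreover have "y < p"
    using assms(1) by (simp add: y_def)
  ultimately have "real D + 1 \<le> min (real y) (real p - real y)"
    by auto
  then have "3 * (real D + 1) / real p \<le> norm (e_frac (int y) p - 1)"
    using norm_e_frac_sub_one_ge[OF assms(1) \<open>y < p\<close>] assms(1)
    by (smt (verit) divide_right_mono mult_left_mono of_nat_0_le_iff)
  also have "e_frac (int y) p - 1 = cnj (e_frac (int r0) p) * (e_frac (int r) p - e_frac (int r0) p)"
  proof -
    have "[int r = int r0 + int y] (mod int p)"
      using assms(2) by (simp add: y_def cong_def of_nat_mod[symmetric] mod_add_right_eq flip: of_nat_add)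
    then have "e_frac (int r) p = e_frac (int r0) p * e_frac (int y) p"
      by (simp add: e_frac_cong[OF assms(1)] e_frac_add)
    moreover have "cnj (e_frac (int r0) p) * e_frac (int r0) p = 1"
      by (metis complex_norm_square norm_e_frac mult.commute of_real_1 power_one)
    ultimately show ?thesis
      by (simp add: algebra_simps)
  qed
  also have "norm \<dots> \<le> norm (e_frac (int r) p - \<eta>) + norm (e_frac (int r0) p - \<eta>)"
    using norm_triangle_ineq4[of "e_frac (int r) p - \<eta>" "e_frac (int r0) p - \<eta>"] by (simp add: norm_mult)
  finally show False
    using assms(3,4) by simp
qed

lemma card_e_frac_near_le:
  assumes "p > 0" "2 * D < p"
  shows "card {r \<in> {..<p}. norm (e_frac (int r) p - \<eta>) < 3 * (real D + 1) / (2 * real p)} \<le> 2 * D + 1"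
    (is "card ?R \<le> _")
proof (cases "?R = {}")
  case False
  then obtain r0 where r0: "r0 \<in> ?R"
    by blast
  have "inj_on (\<lambda>r. (r + p - r0) mod p) ?R"
  proof (rule inj_onI)
    fix r s
    assume rs: "r \<in> ?R" "s \<in> ?R" "(r + p - r0) mod p = (s + p - r0) mod p"
    then have "[r + p - r0 + r0 = s + p - r0 + r0] (mod p)"
      by (intro cong_add) (auto simp: cong_def)
    then have "[r + p = s + p] (mod p)"
      using r0 by simp
    then have "[r = s] (mod p)"
      by (simp add: cong_add_rcancel_nat)
    then show "r = s"
      using rs by (simp add: cong_def)
  qed
  then have "card ?R = card ((\<lambda>r. (r + p - r0) mod p) ` ?R)"
    by (simp add: card_image)
  also have "\<dots> \<le> card ({..D} \<union> {p - D..<p})"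
  proof (intro card_mono image_subsetI)
    fix r
    assume "r \<in> ?R"
    then show "(r + p - r0) mod p \<in> {..D} \<union> {p - D..<p}"
      using r0 by (intro e_frac_near_diff_mod[OF assms(1)]) auto
  qed simp
  also have "\<dots> \<le> 2 * D + 1"
    using assms(2) card_Un_le[of "{..D}" "{p - D..<p}"] by simp
  finally show ?thesis .
qed (simp only: card.empty le0)

lemma norm_eq_Re_mult_cnj_unit:
  fixes z :: complex
  obtains \<eta> where "norm \<eta> = 1" "norm z = Re (z * cnj \<eta>)"
proof (cases "z = 0")
  case True
  then show ?thesis
    using that[of 1] by simp
next
  case False
  have "z * cnj (sgn z) = z * cnj z / complex_of_real (norm z)"
    by (simp add: sgn_eq)
  also have "\<dots> = complex_of_real ((norm z)\<^sup>2) / complex_of_real (norm z)"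
    by (simp only: complex_norm_square)
  also have "\<dots> = complex_of_real (norm z)"
    using False by (simp add: power2_eq_square)
  finally have "norm z = Re (z * cnj (sgn z))"
    by simp
  then show ?thesis
    using False that[of "sgn z"] by (simp add: norm_sgn)
qed

lemma norm_sum_unit_vectors_le:
  fixes u :: "'a \<Rightarrow> complex"
  assumes "finite V" "\<And>v. v \<in> V \<Longrightarrow> norm (u v) = 1" "0 \<le> \<rho>"
    and near: "\<And>\<eta>. norm \<eta> = 1 \<Longrightarrow> card {v \<in> V. norm (u v - \<eta>) < \<rho>} \<le> m"
  shows "norm (\<Sum>v\<in>V. u v) \<le> real (card V) - real (card V - m) * \<rho>\<^sup>2 / 2"
proof -
  obtain \<eta> where \<eta>: "norm \<eta> = 1" and norm_eq: "norm (\<Sum>v\<in>V. u v) = Re ((\<Sum>v\<in>V. u v) * cnj \<eta>)"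
    by (rule norm_eq_Re_mult_cnj_unit)
  \<comment> \<open>each term contributes \<open>1 - \<bar>u v - \<eta>\<bar>\<^sup>2/2\<close>, and at most \<open>m\<close> terms lie within \<open>\<rho>\<close> of \<open>\<eta>\<close>\<close>
  define B where "B = {v \<in> V. norm (u v - \<eta>) < \<rho>}"
  have "B \<subseteq> V" "finite B"
    using assms(1) by (auto simp: B_def)
  have "norm (\<Sum>v\<in>V. u v) = (\<Sum>v\<in>V. 1 - (norm (u v - \<eta>))\<^sup>2 / 2)"
    unfolding norm_eq sum_distrib_right Re_sum
    using Re_mult_cnj_eq[OF assms(2) \<eta>] by (rule sum.cong[OF refl])
  also have "\<dots> = (\<Sum>v\<in>B. 1 - (norm (u v - \<eta>))\<^sup>2 / 2) + (\<Sum>v\<in>V - B. 1 - (norm (u v - \<eta>))\<^sup>2 / 2)"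
    unfolding sum.subset_diff[OF \<open>B \<subseteq> V\<close> assms(1)] by (rule add.commute)
  also have "\<dots> \<le> (\<Sum>v\<in>B. 1) + (\<Sum>v\<in>V - B. 1 - \<rho>\<^sup>2 / 2)"
  proof (intro add_mono sum_mono)
    fix v
    assume "v \<in> V - B"
    then have "\<rho>\<^sup>2 \<le> (norm (u v - \<eta>))\<^sup>2"
      using assms(3) by (intro power_mono) (auto simp: B_def)
    then show "1 - (norm (u v - \<eta>))\<^sup>2 / 2 \<le> 1 - \<rho>\<^sup>2 / 2"
      by simp
  qed simp
  also have "\<dots> = real (card V) - real (card (V - B)) * \<rho>\<^sup>2 / 2"
    using \<open>B \<subseteq> V\<close> \<open>finite B\<close> card_mono[OF assms(1) \<open>B \<subseteq> V\<close>]
    by (simp add: card_Diff_subset of_nat_diff algebra_simps)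
  also have "\<dots> \<le> real (card V) - real (card V - m) * \<rho>\<^sup>2 / 2"
  proof -
    have "card V - m \<le> card (V - B)"
      using near[OF \<eta>] \<open>B \<subseteq> V\<close> \<open>finite B\<close> by (simp add: B_def card_Diff_subset)
    then show ?thesis
      by (intro diff_left_mono divide_right_mono mult_right_mono) auto
  qed
  finally show ?thesis .
qed

lemma card_near_power_terms_le:
  assumes "prime p" "k > 0" "\<not> int p dvd c" "2 * D < p"
  shows "card {v \<in> totatives p. norm (e_frac (c * int v ^ k) p - \<eta>) < 3 * (real D + 1) / (2 * real p)}
    \<le> k * (2 * D + 1)"
proof -
  define \<rho> where "\<rho> = 3 * (real D + 1) / (2 * real p)"
  define R where "R = {r \<in> {..<p}. norm (e_frac (int r) p - \<eta>) < \<rho>}"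
  define F where "F r = {v \<in> totatives p. (c * int v ^ k) mod int p = int r}" for r
  have p: "p > 0"
    using assms(1) by (simp add: prime_gt_0_nat)
  \<comment> \<open>a term close to \<open>\<eta>\<close> lies in the fibre of one of the at most \<open>2D + 1\<close> residues close to \<open>\<eta>\<close>\<close>
  have "{v \<in> totatives p. norm (e_frac (c * int v ^ k) p - \<eta>) < \<rho>} \<subseteq> (\<Union>r\<in>R. F r)"
  proof safe
    fix v
    assume v: "v \<in> totatives p" "norm (e_frac (c * int v ^ k) p - \<eta>) < \<rho>"
    define r where "r = nat ((c * int v ^ k) mod int p)"
    have r: "int r = (c * int v ^ k) mod int p"
      using p by (simp add: r_def)
    then have "r \<in> R"
      using v p by (simp add: R_def e_frac_mod nat_less_iff r_def)
    moreover have "v \<in> F r"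
      using v r by (simp add: F_def)
    ultimately show "v \<in> (\<Union>r\<in>R. F r)"
      by blast
  qed
  then have "card {v \<in> totatives p. norm (e_frac (c * int v ^ k) p - \<eta>) < \<rho>} \<le> card (\<Union>r\<in>R. F r)"
    by (intro card_mono finite_UN_I) (auto simp: F_def R_def)
  also have "\<dots> \<le> (\<Sum>r\<in>R. card (F r))"
    by (rule card_UN_le) (simp add: R_def)
  also have "\<dots> \<le> (\<Sum>r\<in>R. k)"
    unfolding F_def using assms(1-3) by (intro sum_mono card_power_residue_fiber_le)
  also have "\<dots> = k * card R"
    by simp
  also have "\<dots> \<le> k * (2 * D + 1)"
    using card_e_frac_near_le[OF p assms(4), of \<eta>] by (intro mult_left_mono) (simp_all add: R_def \<rho>_def)
  finally show ?thesis
    by (simp add: \<rho>_def)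
qed

lemma obtain_arc_width:
  fixes k p :: nat
  assumes "k > 0" "4 * k + 1 < p"
  obtains D where "2 * (k * (2 * D + 1)) \<le> p - 1" "p < 8 * k * (D + 1)"
proof -
  define D where "D = (p - 1 - 2 * k) div (4 * k)"
  have "4 * k * D \<le> p - 1 - 2 * k"
    unfolding D_def by (metis div_times_less_eq_dividend mult.commute)
  moreover have "p - 1 - 2 * k < 4 * k * (D + 1)"
  proof -
    have "p - 1 - 2 * k = 4 * k * D + (p - 1 - 2 * k) mod (4 * k)"
      by (simp add: D_def)
    moreover have "(p - 1 - 2 * k) mod (4 * k) < 4 * k"
      using assms(1) by simp
    ultimately show ?thesis by simp
  qed
  ultimately show ?thesis
    using assms(2) by (intro that[of D]) (simp_all add: algebra_simps)
qed

lemma norm_Sstar_prime_le: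
  assumes "prime p" "4 * k + 1 < p" "k > 0" "\<not> int p dvd c"
  shows "norm (Sstar k p c) \<le> (1 - 1 / (128 * (real k)\<^sup>2)) * real (p - 1)"
proof -
  obtain D where D: "2 * (k * (2 * D + 1)) \<le> p - 1" "p < 8 * k * (D + 1)"
    using obtain_arc_width[OF assms(3,2)] .
  define \<rho> where "\<rho> = 3 * (real D + 1) / (2 * real p)"
  have "2 * D + 1 \<le> k * (2 * D + 1)"
    using mult_le_mono1[of 1 k "2 * D + 1"] assms(3) by simp
  then have "2 * D < p"
    using D(1) by linarith
  have "card (totatives p) = p - 1"
    using assms(1) by (simp add: totient_def[symmetric] totient_prime)
  then have bound: "norm (Sstar k p c) \<le> real (p - 1) - real (p - 1 - k * (2 * D + 1)) * \<rho>\<^sup>2 / 2"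
    unfolding Sstar_eq_sum_totatives
    using norm_sum_unit_vectors_le[of "totatives p" "\<lambda>v. e_frac (c * int v ^ k) p" \<rho> "k * (2 * D + 1)"]
      card_near_power_terms_le[OF assms(1,3,4) \<open>2 * D < p\<close>] by (simp add: \<rho>_def)
  have half: "real (p - 1) / 2 \<le> real (p - 1 - k * (2 * D + 1))"
    using D(1) by linarith
  have "real p < real (8 * k * (D + 1))"
    using D(2) by (simp only: of_nat_less_iff)
  then have "3 / (16 * real k) * (2 * real p) \<le> 3 * (real D + 1)"
    using assms(3) by (simp add: field_simps)
  then have "3 / (16 * real k) \<le> \<rho>"
    unfolding \<rho>_def using prime_gt_0_nat[OF assms(1)] by (simp add: le_divide_eq)
  then have "(3 / (16 * real k))\<^sup>2 \<le> \<rho>\<^sup>2"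
    using assms(3) by (intro power_mono) auto
  then have "real (p - 1) / 2 * ((3 / (16 * real k))\<^sup>2 / 2) \<le> real (p - 1 - k * (2 * D + 1)) * (\<rho>\<^sup>2 / 2)"
    using half by (intro mult_mono) auto
  moreover have "real (p - 1) * (1 / (128 * (real k)\<^sup>2)) \<le> real (p - 1) / 2 * ((3 / (16 * real k))\<^sup>2 / 2)"
    using assms(3) by (simp add: field_simps power2_eq_square)
  ultimately show ?thesis
    using bound by (simp add: algebra_simps)
qed

lemma norm_Sstar_small_modulus_le:
  assumes "k > 0" "M > 0" "M \<le> 20 * k ^ 3" "v \<in> totatives M" "\<not> int M dvd c * (int v ^ k - 1)"
  shows "norm (Sstar k M c) \<le> (1 - 1 / (4000 * real k ^ 9)) * real (totient M)"
proof -
  have "real M \<le> real (20 * k ^ 3)"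
    using assms(3) by (simp only: of_nat_le_iff)
  then have "real M ^ 3 \<le> (20 * real k ^ 3) ^ 3"
    by (intro power_mono) simp_all
  also have "\<dots> = 8000 * real k ^ 9"
    by (simp add: power_mult_distrib flip: power_mult)
  finally have M_cube: "real M ^ 3 \<le> 8000 * real k ^ 9" .
  have "real (totient M) * (1 / (4000 * real k ^ 9)) \<le> real M * (1 / (4000 * real k ^ 9))"
    by (intro mult_right_mono) (simp_all add: totient_le)
  also have "\<dots> \<le> 2 / (real M)\<^sup>2"
    using M_cube assms(1,2) by (simp add: field_simps power3_eq_cube power2_eq_square)
  finally show ?thesis
    using norm_Sstar_le_totient_minus[OF assms(2,4,5)] by (simp add: algebra_simps)
qed

lemma norm_Sstar_large_prime_le:
  assumes "k \<ge> 2" "prime p" "4 * k + 1 < p" "coprime b (int p)"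
  shows "norm (Sstar k p (2 * b)) \<le> (1 - 1 / (4000 * real k ^ 9)) * real (totient p)"
proof -
  have "\<not> int p dvd b"
    using assms(4) coprime_common_divisor[of b "int p" "int p"] prime_gt_1_nat[OF assms(2)] by auto
  moreover have "\<not> int p dvd 2"
    using assms(1,3) by (auto dest!: zdvd_imp_le)
  ultimately have "\<not> int p dvd 2 * b"
    using assms(2) by (simp add: prime_dvd_mult_iff)
  then have "norm (Sstar k p (2 * b)) \<le> (1 - 1 / (128 * (real k)\<^sup>2)) * real (p - 1)"
    using assms(1) by (intro norm_Sstar_prime_le[OF assms(2,3)]) auto
  also have "\<dots> \<le> (1 - 1 / (4000 * real k ^ 9)) * real (p - 1)"
  proof (intro mult_right_mono diff_left_mono divide_left_mono)
    have "real k ^ 2 \<le> real k ^ 9"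
      using assms(1) by (intro power_increasing) auto
    then show "128 * (real k)\<^sup>2 \<le> 4000 * real k ^ 9"
      using zero_le_power[of "real k" 2] by linarith
  qed (use assms(1) in auto)
  finally show ?thesis
    using assms(2) by (simp add: totient_prime)
qed

lemma prime_power_le_of_half_dvd:
  fixes p e k :: nat
  assumes "p ^ (e div 2) dvd 2 * k" "p \<le> 4 * k + 1" "k > 0" "p > 0"
  shows "p ^ e \<le> 20 * k ^ 3"
proof -
  have "p ^ e \<le> p ^ (2 * (e div 2) + 1)"
    by (intro power_increasing) (use assms(4) in auto)
  also have "\<dots> = p ^ (e div 2) * p ^ (e div 2) * p"
    by (simp add: power_add mult_2 power_mult_distrib)
  also have "\<dots> \<le> (2 * k) * (2 * k) * (4 * k + 1)"
  proof -
    have "p ^ (e div 2) \<le> 2 * k"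
      using assms(1,3) by (intro dvd_imp_le) auto
    then show ?thesis
      using assms(2) by (intro mult_mono) auto
  qed
  also have "\<dots> \<le> 20 * k ^ 3"
    using assms(3) by (simp add: power3_eq_cube algebra_simps)
  finally show ?thesis .
qed

lemma norm_Sstar_prime_power_le:
  assumes "k \<ge> 2" "prime p" "e \<ge> 1" "p ^ (e div 2) dvd 2 * k" "coprime b (int p)"
    and "coprime l p" "\<not> int (p ^ e) dvd 2 * (int l ^ k - 1)"
  shows "norm (Sstar k (p ^ e) (2 * b)) \<le> (1 - 1 / (4000 * real k ^ 9)) * real (totient (p ^ e))"
proof (cases "4 * k + 1 < p")
  case True
  have "e div 2 = 0"
  proof (rule ccontr)
    assume "e div 2 \<noteq> 0"
    then have "p \<le> p ^ (e div 2)"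
      using prime_gt_0_nat[OF assms(2)] by (simp add: self_le_power)
    also have "\<dots> \<le> 2 * k"
      using assms(1,4) by (intro dvd_imp_le) auto
    finally show False
      using True by simp
  qed
  then have "e = 1"
    using assms(3) by arith
  then show ?thesis
    using norm_Sstar_large_prime_le[OF assms(1,2) True assms(5)] by simp
next
  case False
  have "p ^ e > 1"
    using prime_gt_1_nat[OF assms(2)] assms(3) by (intro one_less_power) auto
  moreover have "coprime l (p ^ e)"
    using assms(6) by simp
  ultimately have "l mod p ^ e \<in> totatives (p ^ e)"
    by (rule mod_in_totatives)
  moreover have "\<not> int (p ^ e) dvd (2 * b) * (int (l mod p ^ e) ^ k - 1)"
  proof -
    have "coprime (int (p ^ e)) b"
      using assms(5) by (simp add: coprime_commute)
    moreover have "\<not> int (p ^ e) dvd 2 * (int (l mod p ^ e) ^ k - 1)"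
      using assms(7) unfolding dvd_power_minus_one_mod .
    ultimately show ?thesis
      by (simp add: mult.commute[of 2 b] mult.assoc coprime_dvd_mult_right_iff)
  qed
  moreover have "p ^ e \<le> 20 * k ^ 3"
    using False assms(1,4) prime_gt_0_nat[OF assms(2)] by (intro prime_power_le_of_half_dvd) auto
  ultimately show ?thesis
    using assms(1) prime_gt_0_nat[OF assms(2)] by (intro norm_Sstar_small_modulus_le) auto
qed

lemma norm_Sstar_mult_le:
  assumes "M > 1" "r > 0" "coprime M r" "0 \<le> \<beta>"
    and bound: "\<And>u. coprime u (int M) \<Longrightarrow> norm (Sstar k M (c * u)) \<le> \<beta> * real (totient M)"
  shows "norm (Sstar k (M * r) c) \<le> \<beta> * real (totient (M * r))"
proof (cases "r = 1")
  case True
  then show ?thesis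
    using bound[of 1] by simp
next
  case False
  then have "r > 1"
    using assms(2) by simp
  obtain u w where split: "Sstar k (M * r) c = Sstar k M (c * u) * Sstar k r (c * w)"
    and "coprime u (int M)"
    using Sstar_mult_coprime[OF assms(1) \<open>r > 1\<close> assms(3)] by blast
  have "norm (Sstar k (M * r) c) \<le> (\<beta> * real (totient M)) * real (totient r)"
    unfolding split norm_mult
    using bound[OF \<open>coprime u (int M)\<close>] norm_Sstar_le_totient assms(4) by (intro mult_mono) auto
  also have "\<dots> = \<beta> * real (totient (M * r))"
    using assms(3) by (simp add: totient_mult_coprime)
  finally show ?thesis .
qed

lemma obtain_prime_power_not_dvd:
  fixes q n :: nat
  assumes "q > 0" "\<not> q dvd n"
  obtains p e r where "prime p" "e \<ge> 1" "q = p ^ e * r" "\<not> p dvd r" "\<not> p ^ e dvd n"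
proof -
  have "n \<noteq> 0"
    using assms(2) by (metis dvd_0_right)
  have "\<not> (\<forall>p. prime p \<longrightarrow> multiplicity p q \<le> multiplicity p n)"
    using multiplicity_le_imp_dvd[of q n] assms by auto
  then obtain p where p: "prime p" and less: "multiplicity p n < multiplicity p q"
    by (auto simp: not_le)
  define e where "e = multiplicity p q"
  have unit: "\<not> is_unit p"
    using prime_gt_1_nat[OF p] by simp
  have "\<not> p ^ e dvd n"
    using less by (simp add: e_def power_dvd_iff_le_multiplicity[OF \<open>n \<noteq> 0\<close> unit])
  moreover have "q = p ^ e * (q div p ^ e)"
    by (simp add: e_def multiplicity_dvd)
  moreover have "\<not> p dvd q div p ^ e"
    unfolding e_def using assms(1) unit by (intro multiplicity_decompose) auto
  moreover have "e \<ge> 1"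
    using less by (simp add: e_def)
  ultimately show ?thesis
    using that p by blast
qed

lemma half_prime_power_dvd:
  assumes "prime p" "p ^ e dvd q" "coprime a (int p)"
    and square_dvd: "\<And>d. d > 0 \<Longrightarrow> d * d dvd q \<Longrightarrow> int d dvd 2 * a * int k"
  shows "p ^ (e div 2) dvd 2 * k"
proof -
  have "p ^ (e div 2) * p ^ (e div 2) dvd p ^ e"
    by (simp add: le_imp_power_dvd flip: power_add)
  then have "int (p ^ (e div 2)) dvd 2 * a * int k"
    using assms(2) prime_gt_0_nat[OF assms(1)] by (intro square_dvd) (auto intro: dvd_trans)
  then have "int (p ^ (e div 2)) dvd a * (2 * int k)"
    by (simp only: mult.assoc mult.left_commute[of a 2])
  moreover have "coprime (int (p ^ (e div 2))) a"
    using assms(3) by (simp add: coprime_commute coprime_power_left_iff)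
  ultimately have "int (p ^ (e div 2)) dvd int (2 * k)"
    by (simp add: coprime_dvd_mult_right_iff)
  then show ?thesis
    by (simp only: of_nat_dvd_iff)
qed

lemma norm_Sstar_double_le_of_square_divisors:
  assumes "k \<ge> 2" "q > 0" "coprime a (int q)" "l \<in> totatives q" "\<not> int q dvd 2 * (int l ^ k - 1)"
    and square_dvd: "\<And>d. d > 0 \<Longrightarrow> d * d dvd q \<Longrightarrow> int d dvd 2 * a * int k"
  shows "norm (Sstar k q (2 * a)) \<le> (1 - 1 / (4000 * real k ^ 9)) * real (totient q)"
proof -
  have "\<not> q dvd nat \<bar>2 * (int l ^ k - 1)\<bar>"
    using assms(5) by simp
  then obtain p e r where p: "prime p" "e \<ge> 1" and q: "q = p ^ e * r" and "\<not> p dvd r"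
    and "\<not> p ^ e dvd nat \<bar>2 * (int l ^ k - 1)\<bar>"
    using assms(2) by (metis obtain_prime_power_not_dvd)
  then have not_dvd: "\<not> int (p ^ e) dvd 2 * (int l ^ k - 1)"
    by simp
  have "coprime (p ^ e) r"
    using p \<open>\<not> p dvd r\<close> by (simp add: prime_imp_coprime coprime_commute)
  have "p ^ e > 1"
    using prime_gt_1_nat[OF p(1)] p(2) by (intro one_less_power) auto
  have "r > 0"
    using assms(2) by (auto simp: q intro: gr0I)
  have "p dvd q"
    unfolding q using p(2) by (simp add: dvd_power dvd_mult2)
  have "coprime a (int p)"
    using \<open>p dvd q\<close> by (intro coprime_divisors[OF dvd_refl _ assms(3)]) simp
  have "coprime l q"
    using assms(4) by (simp add: in_totatives_iff)
  then have "coprime l p"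
    by (rule coprime_divisors[OF dvd_refl \<open>p dvd q\<close>])
  have "p ^ e dvd q"
    by (simp add: q)
  then have "p ^ (e div 2) dvd 2 * k"
    using square_dvd by (rule half_prime_power_dvd[OF p(1) _ \<open>coprime a (int p)\<close>])
  have bound: "norm (Sstar k (p ^ e) (2 * a * u)) \<le> (1 - 1 / (4000 * real k ^ 9)) * real (totient (p ^ e))"
    if "coprime u (int (p ^ e))" for u
  proof -
    have "coprime (a * u) (int p)"
      using that \<open>coprime a (int p)\<close> p(2) by (simp add: coprime_commute[of u])
    then show ?thesis
      using norm_Sstar_prime_power_le[OF assms(1) p \<open>p ^ (e div 2) dvd 2 * k\<close> _ \<open>coprime l p\<close> not_dvd]
      by (simp add: mult.assoc)
  qed
  have "1 \<le> real k ^ 9"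
    using assms(1) by (simp add: one_le_power)
  then have "0 \<le> 1 - 1 / (4000 * real k ^ 9)"
    by (simp add: divide_le_eq)
  then show ?thesis
    unfolding q using bound by (rule norm_Sstar_mult_le[OF \<open>p ^ e > 1\<close> \<open>r > 0\<close> \<open>coprime (p ^ e) r\<close>])
qed

lemma norm_Sstar_double_le:
  assumes "k \<ge> 2" "q > 2" "coprime a (int q)" "l \<in> totatives q" "\<not> int q dvd 2 * (int l ^ k - 1)"
  shows "norm (Sstar k q (2 * a)) \<le> (1 - 1 / (4000 * real k ^ 9)) * real (totient q)"
proof (cases "\<exists>d>0. d * d dvd q \<and> \<not> int d dvd 2 * a * int k")
  case True
  then have "Sstar k q (2 * a) = 0"
    using Sstar_eq_0_of_square_dvd by blast
  moreover have "1 \<le> real k ^ 9"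
    using assms(1) by (simp add: one_le_power)
  ultimately show ?thesis
    by (simp add: divide_le_eq)
next
  case False
  then show ?thesis
    using assms by (intro norm_Sstar_double_le_of_square_divisors) auto
qed

lemma Ck_ge_cube:
  assumes "k \<ge> 3"
  shows "real k ^ 3 \<le> Ck k"
proof -
  define P where "P = {p::nat. prime p \<and> p \<le> k ^ 6}"
  have "finite P"
    unfolding P_def by (rule finite_subset[of _ "{..k ^ 6}"]) auto
  moreover have "{2, 3, 5} \<subseteq> P"
  proof -
    have "(5::nat) \<le> 3 ^ 6" by simp
    also have "\<dots> \<le> k ^ 6"
      using assms by (intro power_mono) auto
    finally show ?thesis
      unfolding P_def by auto
  qed
  ultimately have "card {2::nat, 3, 5} \<le> card P"
    by (intro card_mono)
  then have "real k ^ 3 \<le> real k ^ card P"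
    using assms by (intro power_increasing) auto
  then show ?thesis
    using assms by (simp add: Ck_def P_def)
qed

lemma delta_k_le:
  assumes "k \<ge> 2"
  shows "delta_k k \<le> 1 / (2 ^ (2 * k + 11) * real k ^ 9)"
proof -
  have pi_sq: "pi\<^sup>2 \<le> 16"
    using pi_less_4 power_mono[of pi 4 2] by simp
  show ?thesis
  proof (cases "k = 2")
    case True
    have "delta_k k \<le> 16 / (2 ^ 7 * 128 ^ 4)"
      using pi_sq True by (simp add: delta_k_def Ck_def divide_right_mono)
    then show ?thesis
      using True by simp
  next
    case False
    then have k: "k \<ge> 3"
      using assms by simp
    have "(real k ^ 3) ^ (2 * k) \<le> Ck k ^ (2 * k)"
      using Ck_ge_cube[OF k] by (intro power_mono) auto
    then have Ck: "real k ^ (6 * k) \<le> Ck k ^ (2 * k)"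
      by (simp add: power_mult[symmetric])
    have "delta_k k \<le> 16 / (2 ^ (2 * k + 3) * real k ^ (6 * k))"
      unfolding delta_k_def using pi_sq Ck k by (intro frac_le mult_left_mono) auto
    moreover have "2 ^ 12 * real k ^ 9 \<le> real k ^ (6 * k)"
    proof -
      have "2 ^ 12 * real k ^ 9 \<le> real k ^ 9 * real k ^ 9"
        using k power_mono[of 3 "real k" 9] by (intro mult_right_mono) auto
      also have "\<dots> \<le> real k ^ 9 * real k ^ (6 * k - 9)"
        using k by (intro mult_left_mono power_increasing) auto
      also have "\<dots> = real k ^ (6 * k)"
        using k by (simp flip: power_add)
      finally show ?thesis .
    qed
    then have "16 / (2 ^ (2 * k + 3) * real k ^ (6 * k)) \<le> 16 / (2 ^ (2 * k + 3) * (2 ^ 12 * real k ^ 9))"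
      using k by (intro divide_left_mono mult_left_mono mult_pos_pos) auto
    also have "\<dots> = 1 / (2 ^ (2 * k + 11) * real k ^ 9)"
      by (simp add: power_add)
    ultimately show ?thesis
      by linarith
  qed
qed

lemma delta_k_le_generic: "k \<ge> 2 \<Longrightarrow> delta_k k \<le> 1 / (16000 * real k ^ 9)"
proof -
  assume k: "k \<ge> 2"
  have "(16000::real) \<le> 2 ^ 15" by simp
  also have "\<dots> \<le> 2 ^ (2 * k + 11)"
    using k by (intro power_increasing) auto
  finally have "1 / (2 ^ (2 * k + 11) * real k ^ 9) \<le> 1 / (16000 * real k ^ 9)"
    using k by (intro divide_left_mono mult_right_mono) auto
  then show ?thesis
    using delta_k_le[OF k] by linarith
qed

lemma delta_k_le_of_modulus_le:
  assumes "k \<ge> 2" "q > 0" "q \<le> k\<^sup>2 * 2 ^ (k + 3)"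
  shows "delta_k k \<le> 1 / (32 * real k * (real q)\<^sup>2)"
proof -
  have "real q \<le> real (k\<^sup>2 * 2 ^ (k + 3))"
    using assms(3) by (simp only: of_nat_le_iff)
  then have "real q \<le> real k ^ 2 * 2 ^ (k + 3)"
    by simp
  then have "32 * real k * (real q)\<^sup>2 \<le> 32 * real k * (real k ^ 2 * 2 ^ (k + 3))\<^sup>2"
    by (intro mult_left_mono power_mono) auto
  also have "\<dots> = 2 ^ (2 * k + 11) * real k ^ 5"
    by (simp add: power_mult_distrib power_add flip: power_mult) (simp add: mult.commute[of k 2] eval_nat_numeral)
  also have "\<dots> \<le> 2 ^ (2 * k + 11) * real k ^ 9"
    using assms(1) by (intro mult_left_mono power_increasing) auto
  finally have "1 / (2 ^ (2 * k + 11) * real k ^ 9) \<le> 1 / (32 * real k * (real q)\<^sup>2)"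
    using assms(1,2) by (intro divide_left_mono) auto
  then show ?thesis
    using delta_k_le[OF assms(1)] by linarith
qed

lemma abs_cos_phase_eq_of_degenerate:
  assumes "q > 0" "int q dvd 2 * (int l ^ k - 1)"
  shows "\<bar>cos (2 * pi * real_of_int (a * int l ^ k) / real q - \<psi>)\<bar>
           = \<bar>cos (2 * pi * real_of_int a / real q - \<psi>)\<bar>"
proof -
  obtain n where n: "2 * (int l ^ k - 1) = int q * n"
    using assms(2) by (rule dvdE)
  have "2 * real l ^ k - 2 = real q * real_of_int n"
    using arg_cong[OF n, of real_of_int] by simp
  then have "2 * pi * real_of_int (a * int l ^ k) / real q - \<psi>
      = (2 * pi * real_of_int a / real q - \<psi>) + pi * of_int (a * n)"
    using assms(1) by (simp add: field_simps)
  then show ?thesis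
    by (simp only: abs_cos_add_int_pi)
qed

lemma degenerate_phase_sum_le:
  fixes W \<psi> :: real
  assumes "k > 0" "q > 2" "coprime a (int q)"
    and degenerate: "\<forall>l\<in>totatives q. int q dvd 2 * (int l ^ k - 1)"
    and "0 < W" "W \<le> 1" "W ^ k = cos (real k * \<psi>)" "\<bar>real k * \<psi>\<bar> < pi / 2"
  shows "W * \<bar>\<Sum>l\<in>totatives q. cos (2 * pi * real_of_int (a * int l ^ k) / real q - \<psi>)\<bar>
           \<le> (1 - 1 / (32 * real k * (real q)\<^sup>2)) * real (totient q)"
proof -
  define c where "c = \<bar>cos (2 * pi * real_of_int a / real q - \<psi>)\<bar>"
  have "\<not> int q dvd 2 * a"
  proof
    assume "int q dvd 2 * a"
    then have "int q dvd 2"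
      using assms(3) by (metis coprime_commute coprime_dvd_mult_left_iff)
    then have "q dvd 2"
      by presburger
    then show False
      using assms(2) by (simp add: dvd_imp_le leD)
  qed
  then have "3 / (2 * real q) \<le> \<bar>sin (2 * pi * real_of_int a / real q)\<bar>"
    using abs_sin_pi_ratio_ge[of q "2 * a"] assms(2) by (simp add: mult_ac)
  then have Wc: "W * c \<le> 1 - 1 / (32 * real k * (real q)\<^sup>2)"
    unfolding c_def using assms(1,2,5-8) by (intro mult_abs_cos_diff_le) auto
  have "\<bar>\<Sum>l\<in>totatives q. cos (2 * pi * real_of_int (a * int l ^ k) / real q - \<psi>)\<bar>
      \<le> (\<Sum>l\<in>totatives q. \<bar>cos (2 * pi * real_of_int (a * int l ^ k) / real q - \<psi>)\<bar>)"
    by (rule sum_abs)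
  also have "\<dots> = (\<Sum>l\<in>totatives q. c)"
    unfolding c_def using degenerate assms(2) by (intro sum.cong refl abs_cos_phase_eq_of_degenerate) auto
  also have "\<dots> = real (totient q) * c"
    by (simp add: totient_def)
  finally have "\<bar>\<Sum>l\<in>totatives q. cos (2 * pi * real_of_int (a * int l ^ k) / real q - \<psi>)\<bar>
      \<le> real (totient q) * c" .
  then have "W * \<bar>\<Sum>l\<in>totatives q. cos (2 * pi * real_of_int (a * int l ^ k) / real q - \<psi>)\<bar>
      \<le> real (totient q) * (W * c)"
    using assms(5) by (simp add: mult_left_mono mult.left_commute)
  also have "\<dots> \<le> real (totient q) * (1 - 1 / (32 * real k * (real q)\<^sup>2))"
    using Wc by (intro mult_left_mono) auto
  finally show ?thesis
    by (simp add: mult.commute)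
qed

lemma nondegenerate_phase_sum_le:
  fixes W \<psi> :: real
  assumes "k \<ge> 2" "q > 2" "coprime a (int q)" "l0 \<in> totatives q" "\<not> int q dvd 2 * (int l0 ^ k - 1)"
    and "0 < W" "W \<le> 1"
  shows "W * \<bar>\<Sum>l\<in>totatives q. cos (2 * pi * real_of_int (a * int l ^ k) / real q - \<psi>)\<bar>
           \<le> (1 - 1 / (16000 * real k ^ 9)) * real (totient q)"
proof -
  define \<theta> where "\<theta> l = 2 * pi * real_of_int (a * int l ^ k) / real q - \<psi>" for l :: nat
  have "cos (2 * \<theta> l) = Re (cis (- 2 * \<psi>) * e_frac (2 * a * int l ^ k) q)" for l
  proof -
    have "2 * \<theta> l = - 2 * \<psi> + 2 * pi * real_of_int (2 * a * int l ^ k) / real q"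
      by (simp add: \<theta>_def algebra_simps)
    then show ?thesis
      by (simp add: e_frac_def cis_mult)
  qed
  then have "(\<Sum>l\<in>totatives q. cos (2 * \<theta> l)) = Re (cis (- 2 * \<psi>) * Sstar k q (2 * a))"
    by (simp add: Sstar_eq_sum_totatives sum_distrib_left Re_sum)
  also have "\<dots> \<le> norm (Sstar k q (2 * a))"
    using complex_Re_le_cmod[of "cis (- 2 * \<psi>) * Sstar k q (2 * a)"] by (simp add: norm_mult)
  also have "\<dots> \<le> (1 - 1 / (4000 * real k ^ 9)) * real (totient q)"
    by (rule norm_Sstar_double_le[OF assms(1-5)])
  finally have cos_double: "(\<Sum>l\<in>totatives q. cos (2 * \<theta> l)) \<le> (1 - 1 / (4000 * real k ^ 9)) * real (totient q)" .
  have "W * \<bar>\<Sum>l\<in>totatives q. cos (\<theta> l)\<bar> \<le> \<bar>\<Sum>l\<in>totatives q. cos (\<theta> l)\<bar>"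
    using assms(6,7) by (intro mult_left_le_one_le) auto
  also have "\<dots> \<le> (\<Sum>l\<in>totatives q. \<bar>cos (\<theta> l)\<bar>)"
    by (rule sum_abs)
  also have "\<dots> \<le> (\<Sum>l\<in>totatives q. (3 + cos (2 * \<theta> l)) / 4)"
    by (intro sum_mono abs_cos_le_cos_double)
  also have "\<dots> = (3 * real (totient q) + (\<Sum>l\<in>totatives q. cos (2 * \<theta> l))) / 4"
    by (simp add: sum_divide_distrib[symmetric] sum.distrib totient_def)
  also have "\<dots> \<le> (3 * real (totient q) + (1 - 1 / (4000 * real k ^ 9)) * real (totient q)) / 4"
    using cos_double by (intro divide_right_mono add_left_mono) auto
  also have "\<dots> = (1 - 1 / (16000 * real k ^ 9)) * real (totient q)"
    by (simp add: field_simps)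
  finally show ?thesis
    by (simp add: \<theta>_def)
qed

theorem lemma5p2:
  fixes k q :: nat and a :: int and X \<beta> :: real
  assumes "k \<ge> 2" and "X > 0" and "q > 2" and "coprime a (int q)"
  shows "\<bar>Re (Sstar k q a / (1 - 2 * of_real pi * \<i> * of_real \<beta> * of_real X) powr (1 / of_nat k))\<bar>
           \<le> (1 - delta_k k) * real (totient q)"
proof -
  have "Re (1 - 2 * of_real pi * \<i> * of_real \<beta> * of_real X) = 1" "k > 0"
    using assms(1) by simp_all
  then obtain W \<psi> where Re_eq: "Re (Sstar k q a / (1 - 2 * of_real pi * \<i> * of_real \<beta> * of_real X) powr (1 / of_nat k))
      = W * (\<Sum>l\<in>totatives q. cos (2 * pi * real_of_int (a * int l ^ k) / real q - \<psi>))"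
    and W: "0 < W" "W \<le> 1" "W ^ k = cos (real k * \<psi>)" "\<bar>real k * \<psi>\<bar> < pi / 2"
    by (rule Re_Sstar_div_root)
  have "W * \<bar>\<Sum>l\<in>totatives q. cos (2 * pi * real_of_int (a * int l ^ k) / real q - \<psi>)\<bar>
      \<le> (1 - delta_k k) * real (totient q)"
  proof (cases "\<forall>l\<in>totatives q. int q dvd 2 * (int l ^ k - 1)")
    case True
    then have "q \<le> k\<^sup>2 * 2 ^ (k + 3)"
      using assms(1,3) by (intro degenerate_modulus_le) auto
    then have "delta_k k \<le> 1 / (32 * real k * (real q)\<^sup>2)"
      using assms(1,3) by (intro delta_k_le_of_modulus_le) auto
    then have "(1 - 1 / (32 * real k * (real q)\<^sup>2)) * real (totient q) \<le> (1 - delta_k k) * real (totient q)"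
      by (intro mult_right_mono) auto
    then show ?thesis
      using degenerate_phase_sum_le[OF _ assms(3,4) True W] assms(1) by linarith
  next
    case False
    then obtain l0 where l0: "l0 \<in> totatives q" "\<not> int q dvd 2 * (int l0 ^ k - 1)"
      by blast
    have "(1 - 1 / (16000 * real k ^ 9)) * real (totient q) \<le> (1 - delta_k k) * real (totient q)"
      using delta_k_le_generic[OF assms(1)] by (intro mult_right_mono) auto
    then show ?thesis
      using nondegenerate_phase_sum_le[OF assms(1,3,4) l0 W(1,2), where \<psi> = \<psi>] by linarith
  qed
  then show ?thesis
    using Re_eq W(1) by (simp add: abs_mult)
qed

end
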